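(* Let $CK(z)=\sum_{n\ge1}|CK_n|z^n$. Then, as formal power series, $$CK(z)=2z^2+\sum_{m\ge1}m!\,z^{m-1}\left(\frac{1-z}{1+z}\right)^{m-1}\frac{z(1-2z-z^2)}{(1+z)^2}.$$
   Context: $CK_n=\{\sigma\in S_n: |\sigma_i-\sigma_{i+1}|>1 \text{ for } 1\le i\le n-1, \text{ and } |\sigma_1-\sigma_n|>1\}$, the set of cylindrical king permutations (one-line notation); $CK_1=S_1$. *)

theory Defs
  imports "HOL-Computational_Algebra.Formal_Power_Series" "HOL-Combinatorics.Permutations"
begin

text \<open>Cylindrical king permutations of [n], as bijections of {1..n} (one-line notation
  sigma_i = sigma i).  By convention CK_1 = S_1.\<close>
definition CK :: "nat \<Rightarrow> (nat \<Rightarrow> nat) set" where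
  "CK n = {\<sigma>. \<sigma> permutes {1..n} \<and>
     (n = 1 \<or>
      ((\<forall>i\<in>{1..<n}. \<bar>int (\<sigma> i) - int (\<sigma> (Suc i))\<bar> > 1) \<and>
       \<bar>int (\<sigma> 1) - int (\<sigma> n)\<bar> > 1))}"

definition CK_gf :: "real fps" where
  "CK_gf = Abs_fps (\<lambda>n. if n = 0 then 0 else of_nat (card (CK n)))"

end

theory Submission
  imports Defs "HOL-Combinatorics.Multiset_Permutations"
begin

text \<open>
  Encode a permutation of \<open>{1..n}\<close> as a list and call a nonempty list of values that
  successively differ by one a block. Inclusion--exclusion over the cyclically adjacent pairs
  of values differing by one, applied to all \<open>n\<close> rotations of a permutation, expresses
  \<open>|CK_n|\<close> for \<open>n \<ge> 3\<close> as a sum over the sequences of \<open>k\<close> blocks concatenating to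
  a permutation, each weighted by \<open>(-1)^(n+k)\<close> times the length of its first block.
  Rotating the sequence of blocks shows that this weight averages to \<open>n/k\<close>. The block
  containing \<open>n\<close> is one of the two intervals ending at \<open>n\<close>; removing it shows that
  there are \<open>(-1)^(n+k) k! [z^n] w^k\<close> such sequences, where \<open>w = z(1-z)/(1+z)\<close>.
  Hence \<open>|CK_n| = \<Sum>\<^sub>m m! n [z^n] w^(m+1)\<close>, and \<open>n [z^n] f = [z^n] z f'\<close> turns this into
  the stated series. The same formula gives \<open>|CK_1| = 1\<close> but \<open>-2\<close> instead of
  \<open>|CK_2| = 0\<close>, whence the term \<open>2 z^2\<close>.
\<close>

unbundle fps_syntax

section \<open>Power series\<close>

text \<open>For \<open>c \<ge> 1\<close> the coefficient of \<open>z^c\<close> is \<open>(-1)^(c-1)\<close> times the number of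
  blocks with value set \<open>{n-c+1..n}\<close>: one for \<open>c = 1\<close>, two otherwise.\<close>
definition signed_block_fps :: "'a::field fps" where
  "signed_block_fps = fps_X * (1 - fps_X) / (1 + fps_X)"

lemma signed_block_fps_altdef:
  "signed_block_fps = fps_X * ((1 - fps_X) * inverse (1 + fps_X :: 'a::field fps))"
  unfolding signed_block_fps_def by (subst fps_divide_unit) (simp_all add: mult.assoc)

lemma signed_block_fps_nth:
  "(signed_block_fps :: 'a::field fps) $ c =
     (if c = 0 then 0 else if c = 1 then 1 else 2 * (-1) ^ (c - 1))"
proof -
  have "((1 - fps_X) * inverse (1 + fps_X :: 'a fps)) $ i = (if i = 0 then 1 else 2 * (-1) ^ i)" for i
    by (cases i) (simp_all add: fps_inverse_fps_X_plus1 left_diff_distrib)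
  then show ?thesis
    by (cases c) (auto simp: signed_block_fps_altdef)
qed

lemma signed_block_fps_power_nth_eq_0:
  "n < k \<Longrightarrow> ((signed_block_fps :: 'a::field fps) ^ k) $ n = 0"
  by (simp add: signed_block_fps_altdef power_mult_distrib fps_X_power_mult_nth)

lemma fps_deriv_signed_block_fps:
  "fps_deriv (signed_block_fps :: 'a::field fps) = (1 - 2 * fps_X - fps_X ^ 2) / (1 + fps_X) ^ 2"
proof -
  have unit: "(1 + fps_X :: 'a fps) dvd a" for a
    by (rule unit_imp_dvd) (simp add: fps_is_unit_iff)
  show ?thesis
    unfolding signed_block_fps_def
    by (subst fps_divide_deriv[OF unit]) (simp add: algebra_simps power2_eq_square)
qed

lemma fps_X_mult_deriv_nth:
  "(fps_X * fps_deriv f) $ n = of_nat n * f $ n"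
  by (cases n) simp_all

lemma sums_fps_of_nth_vanishing:
  fixes f :: "nat \<Rightarrow> 'a::ab_group_add fps"
  assumes "\<And>m n. n \<le> m \<Longrightarrow> f m $ n = 0"
  shows "f sums Abs_fps (\<lambda>n. \<Sum>m<n. f m $ n)"
  unfolding sums_def
proof (rule tendsto_fpsI)
  fix n
  show "\<forall>\<^sub>F N in sequentially. (\<Sum>m<N. f m) $ n = Abs_fps (\<lambda>n. \<Sum>m<n. f m $ n) $ n"
  proof (rule eventually_sequentiallyI)
    fix N assume "n \<le> N"
    then show "(\<Sum>m<N. f m) $ n = Abs_fps (\<lambda>n. \<Sum>m<n. f m $ n) $ n"
      using assms by (simp add: fps_sum_nth) (rule sum.mono_neutral_right; auto)
  qed
qed

lemma signed_block_fps_summand: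
  fixes m :: nat
  shows "fps_const (fact (Suc m)) * fps_X ^ m * ((1 - fps_X) / (1 + fps_X)) ^ m *
           (fps_X * (1 - 2 * fps_X - fps_X ^ 2) / (1 + fps_X) ^ 2)
         = fps_const (fact m) * (fps_X * fps_deriv ((signed_block_fps :: 'a::field_char_0 fps) ^ Suc m))"
proof -
  define I where "I = inverse (1 + fps_X :: 'a fps)"
  have div: "a / (1 + fps_X) ^ k = a * I ^ k" for a :: "'a fps" and k
    unfolding I_def by (subst fps_divide_unit) (simp_all add: fps_inverse_power)
  have w: "signed_block_fps = fps_X * (1 - fps_X) * I"
    using div[of _ 1] by (simp add: signed_block_fps_def)
  have "fps_deriv ((signed_block_fps :: 'a fps) ^ Suc m) =
      fps_const (of_nat (Suc m)) * ((1 - 2 * fps_X - fps_X ^ 2) * I ^ 2) * signed_block_fps ^ m"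
    by (simp only: fps_deriv_power diff_Suc_1 fps_deriv_signed_block_fps div)
  moreover have "fps_const (fact (Suc m) :: 'a) = fps_const (of_nat (Suc m)) * fps_const (fact m)"
    by (simp only: fact_Suc fps_const_mult)
  moreover have "((1 - fps_X) / (1 + fps_X)) ^ m = ((1 - fps_X) * I) ^ m"
    using div[of _ 1] by simp
  ultimately show ?thesis
    by (simp add: w div power_mult_distrib mult_ac)
qed

section \<open>Decompositions into runs\<close>

definition is_run :: "('a \<Rightarrow> 'a \<Rightarrow> bool) \<Rightarrow> 'a list \<Rightarrow> bool" where
  "is_run R p \<longleftrightarrow> p \<noteq> [] \<and> successively R p"

definition run_decomps :: "('a \<Rightarrow> 'a \<Rightarrow> bool) \<Rightarrow> 'a list \<Rightarrow> 'a list list set" where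
  "run_decomps R xs = {ps. concat ps = xs \<and> (\<forall>p\<in>set ps. is_run R p)}"

lemma length_le_length_concat: "\<forall>p\<in>set ps. p \<noteq> [] \<Longrightarrow> length ps \<le> length (concat ps)"
proof (induction ps)
  case (Cons p ps)
  then show ?case by (cases p) auto
qed simp

lemma finite_run_decomps: "finite (run_decomps R xs)"
proof (rule finite_subset)
  let ?P = "{p. set p \<subseteq> set xs \<and> length p \<le> length xs}"
  show "run_decomps R xs \<subseteq> {ps. set ps \<subseteq> ?P \<and> length ps \<le> length xs}"
  proof
    fix ps assume "ps \<in> run_decomps R xs"
    then have xs: "xs = concat ps" and runs: "\<forall>p\<in>set ps. is_run R p"
      by (auto simp: run_decomps_def)
    have "length ps \<le> length xs"
      using length_le_length_concat[of ps] runs by (auto simp: xs is_run_def)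
    moreover have "p \<in> ?P" if "p \<in> set ps" for p
    proof -
      obtain us vs where "ps = us @ p # vs" using \<open>p \<in> set ps\<close> by (meson split_list)
      then show ?thesis by (auto simp: xs)
    qed
    ultimately show "ps \<in> {ps. set ps \<subseteq> ?P \<and> length ps \<le> length xs}" by blast
  qed
  show "finite {ps. set ps \<subseteq> ?P \<and> length ps \<le> length xs}"
    by (intro finite_lists_length_le) simp_all
qed

lemma run_decomps_Nil [simp]: "run_decomps R [] = {[]}"
  by (auto simp: run_decomps_def is_run_def)

lemma run_decomps_singleton [simp]: "run_decomps R [x] = {[[x]]}"
proof -
  have "ps = [[x]]" if "concat ps = [x]" "\<forall>p\<in>set ps. p \<noteq> []" for ps
    using that by (induction ps) (auto simp: append_eq_Cons_conv)
  then show ?thesis by (auto simp: run_decomps_def is_run_def)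
qed

lemma run_decomps_hd_nonempty:
  "xs \<noteq> [] \<Longrightarrow> ps \<in> run_decomps R xs \<Longrightarrow> ps \<noteq> [] \<and> hd ps \<noteq> []"
  by (cases ps) (auto simp: run_decomps_def is_run_def)

lemma run_decomps_Cons:
  assumes "xs \<noteq> []"
  shows "run_decomps R (x # xs) = (\<lambda>ps. [x] # ps) ` run_decomps R xs \<union>
     (if R x (hd xs) then (\<lambda>ps. (x # hd ps) # tl ps) ` run_decomps R xs else {})"
    (is "_ = ?new ` _ \<union> ?ext")
proof (intro equalityI subsetI)
  fix ps assume "ps \<in> run_decomps R (x # xs)"
  then obtain p ps' where ps: "ps = (x # p) # ps'" and xs: "xs = p @ concat ps'"
    and runs: "is_run R (x # p)" "\<forall>q\<in>set ps'. is_run R q"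
    by (cases ps; cases "hd ps") (auto simp: run_decomps_def is_run_def)
  show "ps \<in> ?new ` run_decomps R xs \<union> ?ext"
  proof (cases "p = []")
    case True
    then show ?thesis using ps xs runs by (auto simp: run_decomps_def)
  next
    case False
    then have "R x (hd xs)" "p # ps' \<in> run_decomps R xs"
      using runs xs by (auto simp: run_decomps_def is_run_def successively_Cons)
    then show ?thesis using ps by (auto intro!: image_eqI[of _ _ "p # ps'"])
  qed
next
  fix ps assume ps: "ps \<in> ?new ` run_decomps R xs \<union> ?ext"
  show "ps \<in> run_decomps R (x # xs)"
  proof (cases "ps \<in> ?new ` run_decomps R xs")
    case True then show ?thesis by (auto simp: run_decomps_def is_run_def)
  next
    case False
    with ps obtain qs where "R x (hd xs)" "qs \<in> run_decomps R xs" "ps = (x # hd qs) # tl qs"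
      by (auto split: if_splits)
    moreover from this have "qs \<noteq> []" "hd qs \<noteq> []" "hd (hd qs) = hd xs"
      using run_decomps_hd_nonempty[OF assms] by (auto simp: run_decomps_def hd_concat)
    ultimately show ?thesis
      by (cases qs; cases "hd qs") (auto simp: run_decomps_def is_run_def successively_Cons)
  qed
qed

lemma sum_run_decomps_Cons:
  assumes "xs \<noteq> []"
  shows "(\<Sum>ps\<in>run_decomps R (x # xs). f ps) = (\<Sum>ps\<in>run_decomps R xs. f ([x] # ps)) +
     (if R x (hd xs) then (\<Sum>ps\<in>run_decomps R xs. f ((x # hd ps) # tl ps)) else 0)"
proof -
  note nonempty = run_decomps_hd_nonempty[OF assms]
  have inj_new: "inj_on (\<lambda>ps. [x] # ps) (run_decomps R xs)"
    by (auto simp: inj_on_def)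
  have inj_ext: "inj_on (\<lambda>ps. (x # hd ps) # tl ps) (run_decomps R xs)"
    by (rule inj_onI) (metis nonempty list.collapse list.inject)
  have disjoint: "(\<lambda>ps. [x] # ps) ` run_decomps R xs \<inter> (\<lambda>ps. (x # hd ps) # tl ps) ` run_decomps R xs = {}"
    using nonempty by fastforce
  show ?thesis
    unfolding run_decomps_Cons[OF assms]
    using disjoint by (simp add: sum.union_disjoint finite_run_decomps sum.reindex[OF inj_new]
        sum.reindex[OF inj_ext])
qed

text \<open>Inclusion--exclusion over the adjacent pairs related by \<open>R\<close>: a decomposition
  merges \<open>length xs - length ps\<close> such pairs into runs.\<close>
lemma sum_run_decomps_sign:
  "(\<Sum>ps\<in>run_decomps R xs. (-1::int) ^ (length xs + length ps)) =
     (if successively (\<lambda>a b. \<not> R a b) xs then 1 else 0)"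
proof (induction xs)
  case (Cons x xs)
  show ?case
  proof (cases "xs = []")
    case False
    have sign: "(-1::int) ^ (length xs + (length ps - Suc 0)) = - ((-1) ^ (length xs + length ps))"
      if "ps \<in> run_decomps R xs" for ps
      using run_decomps_hd_nonempty[OF False that] by (cases ps) auto
    have "(\<Sum>ps\<in>run_decomps R (x # xs). (-1::int) ^ (length (x # xs) + length ps)) =
        (\<Sum>ps\<in>run_decomps R xs. (-1) ^ (length xs + length ps)) -
        (if R x (hd xs) then (\<Sum>ps\<in>run_decomps R xs. (-1) ^ (length xs + length ps)) else 0)"
      by (simp add: sum_run_decomps_Cons[OF False] sign sum_negf cong: sum.cong)
    then show ?thesis using Cons.IH False by (simp add: successively_Cons)
  qed simp
qed simp

definition signed_run_sum :: "('a \<Rightarrow> 'a \<Rightarrow> bool) \<Rightarrow> nat \<Rightarrow> 'a list \<Rightarrow> int" where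
  "signed_run_sum R j xs =
     (\<Sum>ps\<in>run_decomps R xs. if j < length (hd ps) then (-1) ^ (length xs + length ps) else 0)"

lemma signed_run_sum_eq:
  assumes "j < length xs"
  shows "signed_run_sum R j xs =
    (if successively R (take (Suc j) xs) \<and> successively (\<lambda>a b. \<not> R a b) (drop j xs)
     then (-1) ^ j else 0)"
  using assms
proof (induction j arbitrary: xs)
  case 0
  then have "signed_run_sum R 0 xs = (\<Sum>ps\<in>run_decomps R xs. (-1) ^ (length xs + length ps))"
    unfolding signed_run_sum_def
    by (intro sum.cong refl) (auto dest: run_decomps_hd_nonempty)
  also have "\<dots> = (if successively (\<lambda>a b. \<not> R a b) xs then 1 else 0)"
    by (rule sum_run_decomps_sign)
  finally show ?case using 0 by (cases xs) auto
next
  case (Suc j)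
  then obtain x xs' where xs: "xs = x # xs'" and "j < length xs'"
    by (cases xs) auto
  then have "xs' \<noteq> []" by auto
  have "signed_run_sum R (Suc j) xs = (if R x (hd xs') then - signed_run_sum R j xs' else 0)"
    unfolding signed_run_sum_def xs sum_run_decomps_Cons[OF \<open>xs' \<noteq> []\<close>]
    by (auto simp: sum_negf[symmetric] intro!: sum.cong dest: run_decomps_hd_nonempty[OF \<open>xs' \<noteq> []\<close>])
  also have "\<dots> = (if successively R (take (Suc (Suc j)) xs) \<and>
      successively (\<lambda>a b. \<not> R a b) (drop (Suc j) xs) then (-1) ^ Suc j else 0)"
    using Suc.IH[OF \<open>j < length xs'\<close>] \<open>xs' \<noteq> []\<close>
    by (cases xs') (auto simp: xs successively_Cons)
  finally show ?case .
qed

section \<open>Cyclic words\<close>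

definition cyclic_rel :: "('a \<Rightarrow> 'a \<Rightarrow> bool) \<Rightarrow> 'a list \<Rightarrow> nat \<Rightarrow> bool" where
  "cyclic_rel R xs i \<longleftrightarrow> R (xs ! i) (xs ! (Suc i mod length xs))"

lemma signed_run_sum_rotate:
  assumes n: "length xs = n" and j: "j < n"
  shows "signed_run_sum R j (rotate (n - j) xs) =
    (if (\<forall>s\<in>{n - j..<n}. cyclic_rel R xs s) \<and> (\<forall>i. Suc i < n - j \<longrightarrow> \<not> cyclic_rel R xs i)
     then (-1) ^ j else 0)"
proof -
  let ?ys = "rotate (n - j) xs"
  have ys_nth: "?ys ! i = xs ! ((n - j + i) mod n)" if "i < n" for i
    using that n by (simp add: nth_rotate)
  have "successively R (take (Suc j) ?ys) \<longleftrightarrow> (\<forall>i<j. cyclic_rel R xs (n - j + i))"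
    using j n by (auto simp: successively_conv_nth cyclic_rel_def ys_nth mod_Suc_eq)
  also have "\<dots> \<longleftrightarrow> (\<forall>s\<in>(\<lambda>i. n - j + i) ` {..<j}. cyclic_rel R xs s)"
    by auto
  also have "(\<lambda>i. n - j + i) ` {..<j} = {n - j..<n}"
    using j by (simp only: lessThan_atLeast0 image_add_atLeastLessThan) simp
  finally have prefix: "successively R (take (Suc j) ?ys) \<longleftrightarrow> (\<forall>s\<in>{n - j..<n}. cyclic_rel R xs s)" .
  have "drop j ?ys = take (n - j) xs"
    using j n by (cases "j = 0") (simp_all add: rotate_drop_take)
  then have suffix: "successively (\<lambda>a b. \<not> R a b) (drop j ?ys) \<longleftrightarrow>
      (\<forall>i. Suc i < n - j \<longrightarrow> \<not> cyclic_rel R xs i)"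
    using n by (auto simp: successively_conv_nth cyclic_rel_def)
  show ?thesis
    using signed_run_sum_eq[of j ?ys R] n j by (simp only: prefix suffix length_rotate)
qed

lemma sum_alternating_split:
  fixes B :: "nat \<Rightarrow> bool"
  shows "(\<Sum>t<n. if (\<forall>s\<in>{Suc t..<n}. B s) \<and> (\<forall>i<t. \<not> B i) then (-1::int) ^ (n - Suc t) else 0) =
    (if \<forall>i<n. \<not> B i then 1 else 0) - (if \<forall>i<n. B i then (-1) ^ n else 0)"
    (is "?S n = _")
proof (induction n)
  case (Suc n)
  have step: "(if (\<forall>s\<in>{Suc t..<Suc n}. B s) \<and> (\<forall>i<t. \<not> B i) then (-1::int) ^ (Suc n - Suc t) else 0) =
      - (if B n then (if (\<forall>s\<in>{Suc t..<n}. B s) \<and> (\<forall>i<t. \<not> B i) then (-1) ^ (n - Suc t) else 0)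
         else 0)" if "t < n" for t
  proof -
    have "Suc n - Suc t = Suc (n - Suc t)" using that by simp
    then show ?thesis using that by (auto simp: atLeastLessThanSuc)
  qed
  have "?S (Suc n) = - (if B n then ?S n else 0) + (if \<forall>i<n. \<not> B i then 1 else 0)"
    by (simp add: step sum_negf)
  then show ?case
    by (simp only: Suc.IH) (auto simp: less_Suc_eq)
qed simp

lemma sum_signed_run_sum_rotations:
  assumes "length xs = n"
  shows "(\<Sum>j<n. signed_run_sum R j (rotate (n - j) xs)) =
    (if \<forall>i<n. \<not> cyclic_rel R xs i then 1 else 0) - (if \<forall>i<n. cyclic_rel R xs i then (-1) ^ n else 0)"
proof -
  have "(\<Sum>j<n. signed_run_sum R j (rotate (n - j) xs)) =
      (\<Sum>t<n. signed_run_sum R (n - Suc t) (rotate (Suc t) xs))"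
    by (subst sum.nat_diff_reindex[symmetric]) simp
  also have "\<dots> = (\<Sum>t<n. if (\<forall>s\<in>{Suc t..<n}. cyclic_rel R xs s) \<and> (\<forall>i<t. \<not> cyclic_rel R xs i)
      then (-1) ^ (n - Suc t) else 0)"
  proof (intro sum.cong refl)
    fix t assume "t \<in> {..<n}"
    then have "n - (n - Suc t) = Suc t" "n - Suc t < n" by auto
    then show "signed_run_sum R (n - Suc t) (rotate (Suc t) xs) =
      (if (\<forall>s\<in>{Suc t..<n}. cyclic_rel R xs s) \<and> (\<forall>i<t. \<not> cyclic_rel R xs i)
       then (-1) ^ (n - Suc t) else 0)"
      using signed_run_sum_rotate[OF assms, of "n - Suc t" R] by (simp del: rotate_Suc)
  qed
  also have "\<dots> = (if \<forall>i<n. \<not> cyclic_rel R xs i then 1 else 0) -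
      (if \<forall>i<n. cyclic_rel R xs i then (-1) ^ n else 0)"
    by (rule sum_alternating_split)
  finally show ?thesis .
qed

lemma sum_rotate_invariant:
  assumes len: "\<And>xs. xs \<in> S \<Longrightarrow> length xs = n"
    and closed: "\<And>i xs. xs \<in> S \<Longrightarrow> rotate i xs \<in> S"
  shows "(\<Sum>xs\<in>S. f (rotate j xs)) = sum f S"
proof (rule sum.reindex_bij_witness[where i = "rotate (n - j mod n)" and j = "rotate j"])
  have cancel: "rotate (n - j mod n + j) xs = xs" if "length xs = n" for xs :: "'a list"
  proof (cases "n = 0")
    case False
    have "n * Suc (j div n) = n + j div n * n" by simp
    then have "n - j mod n + j = n * Suc (j div n)"
      using mod_less_divisor[of n j] div_mult_mod_eq[of j n] False by linarith
    then show ?thesis using that by simp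
  qed (use that in simp)
  show "rotate (n - j mod n) (rotate j xs) = xs" "rotate j (rotate (n - j mod n) xs) = xs"
    if "xs \<in> S" for xs
    using cancel[OF len[OF that]] by (simp_all add: rotate_rotate add.commute)
qed (use closed in simp_all)

lemma rotate_permutations_of_set: "xs \<in> permutations_of_set A \<Longrightarrow> rotate i xs \<in> permutations_of_set A"
  by (simp add: permutations_of_set_def)

lemma sum_lessThan_if_less:
  "m \<le> n \<Longrightarrow> (\<Sum>j<n. if j < m then c else 0) = of_nat m * (c :: 'a::comm_semiring_1)"
proof -
  assume "m \<le> n"
  then have "{..<n} \<inter> {j. j < m} = {..<m}" by auto
  then show ?thesis by (simp add: sum.If_cases)
qed

text \<open>Summed over its rotations, the signed run sums of a word detect cyclic avoidance of
  \<open>R\<close> (words related all the way round are excluded by hypothesis). Undoing the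
  rotations marks a position in the first run, hence the weight \<open>length (hd ps)\<close>.\<close>
lemma card_cyclic_avoiding_permutations:
  assumes A: "finite A" "card A = n"
    and not_all: "\<And>xs. xs \<in> permutations_of_set A \<Longrightarrow> \<exists>i<n. \<not> cyclic_rel R xs i"
  shows "int (card {xs\<in>permutations_of_set A. \<forall>i<n. \<not> cyclic_rel R xs i}) =
    (\<Sum>xs\<in>permutations_of_set A. \<Sum>ps\<in>run_decomps R xs. (-1) ^ (n + length ps) * int (length (hd ps)))"
proof -
  let ?P = "permutations_of_set A"
  have len: "length xs = n" if "xs \<in> ?P" for xs
    using that A by (simp add: length_finite_permutations_of_set)
  have "int (card {xs\<in>?P. \<forall>i<n. \<not> cyclic_rel R xs i}) =
      (\<Sum>xs\<in>?P. if \<forall>i<n. \<not> cyclic_rel R xs i then 1 else 0)"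
    by (simp add: sum.If_cases Int_def)
  also have "\<dots> = (\<Sum>xs\<in>?P. \<Sum>j<n. signed_run_sum R j (rotate (n - j) xs))"
    using not_all by (intro sum.cong refl) (force simp: sum_signed_run_sum_rotations len)
  also have "\<dots> = (\<Sum>j<n. \<Sum>xs\<in>?P. signed_run_sum R j xs)"
    by (subst sum.swap) (simp add: sum_rotate_invariant[OF len rotate_permutations_of_set])
  also have "\<dots> = (\<Sum>xs\<in>?P. \<Sum>ps\<in>run_decomps R xs. \<Sum>j<n.
      if j < length (hd ps) then (-1) ^ (n + length ps) else 0)"
  proof (subst sum.swap, intro sum.cong refl)
    fix xs assume "xs \<in> ?P"
    show "(\<Sum>j<n. signed_run_sum R j xs) = (\<Sum>ps\<in>run_decomps R xs. \<Sum>j<n.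
        if j < length (hd ps) then (-1) ^ (n + length ps) else 0)"
      unfolding signed_run_sum_def len[OF \<open>xs \<in> ?P\<close>] by (rule sum.swap)
  qed
  also have "\<dots> = (\<Sum>xs\<in>?P. \<Sum>ps\<in>run_decomps R xs. (-1) ^ (n + length ps) * int (length (hd ps)))"
  proof (intro sum.cong refl)
    fix xs ps assume "xs \<in> ?P" "ps \<in> run_decomps R xs"
    then have "length (hd ps) \<le> n"
      using len not_all by (cases ps) (fastforce simp: run_decomps_def)+
    then show "(\<Sum>j<n. if j < length (hd ps) then (-1) ^ (n + length ps) else 0) =
        (-1) ^ (n + length ps) * int (length (hd ps))"
      by (simp add: sum_lessThan_if_less mult.commute)
  qed
  finally show ?thesis .
qed

section \<open>Sequences of runs covering a set\<close>

definition run_seqs :: "('a \<Rightarrow> 'a \<Rightarrow> bool) \<Rightarrow> 'a set \<Rightarrow> nat \<Rightarrow> 'a list list set" where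
  "run_seqs R A k =
     {ps. length ps = k \<and> (\<forall>p\<in>set ps. is_run R p) \<and> concat ps \<in> permutations_of_set A}"

lemma run_seqs_altdef:
  "run_seqs R A k = {ps \<in> (\<Union>xs\<in>permutations_of_set A. run_decomps R xs). length ps = k}"
  by (auto simp: run_seqs_def run_decomps_def)

lemma finite_run_seqs: "finite A \<Longrightarrow> finite (run_seqs R A k)"
  by (simp add: run_seqs_altdef finite_run_decomps)

lemma set_concat_run_seqs: "ps \<in> run_seqs R A k \<Longrightarrow> set (concat ps) = A"
  by (simp add: run_seqs_def permutations_of_set_def)

lemma distinct_concat_run_seqs: "ps \<in> run_seqs R A k \<Longrightarrow> distinct (concat ps)"
  by (simp add: run_seqs_def permutations_of_set_def)

lemma length_concat_run_seqs: "finite A \<Longrightarrow> ps \<in> run_seqs R A k \<Longrightarrow> length (concat ps) = card A"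
  by (simp add: run_seqs_def length_finite_permutations_of_set)

lemma sum_permutations_run_decomps:
  assumes "finite A"
  shows "(\<Sum>xs\<in>permutations_of_set A. \<Sum>ps\<in>run_decomps R xs. g ps) =
    (\<Sum>k\<le>card A. \<Sum>ps\<in>run_seqs R A k. g ps)"
proof -
  let ?U = "\<Union>xs\<in>permutations_of_set A. run_decomps R xs"
  have "(\<Sum>xs\<in>permutations_of_set A. \<Sum>ps\<in>run_decomps R xs. g ps) = sum g ?U"
    using finite_run_decomps by (intro sum.UNION_disjoint[symmetric]) (auto simp: run_decomps_def)
  also have "\<dots> = (\<Sum>k\<le>card A. \<Sum>ps\<in>{ps\<in>?U. length ps = k}. g ps)"
  proof (rule sum.group[symmetric])
    show "finite ?U" by (simp add: finite_run_decomps)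
    show "length ` ?U \<subseteq> {..card A}"
      using assms length_le_length_concat
      by (fastforce simp: run_decomps_def is_run_def length_finite_permutations_of_set)
  qed simp
  finally show ?thesis by (simp only: run_seqs_altdef)
qed

lemma concat_rotate:
  "concat (rotate i ps) = rotate (length (concat (take (i mod length ps) ps))) (concat ps)"
  by (metis append_take_drop_id concat_append rotate_append rotate_drop_take)

lemma rotate_run_seqs: "ps \<in> run_seqs R A k \<Longrightarrow> rotate i ps \<in> run_seqs R A k"
  by (simp add: run_seqs_def concat_rotate rotate_permutations_of_set)

text \<open>Rotating a sequence of runs brings any of its runs to the front, so the first run
  has average length \<open>card A / k\<close>.\<close>
lemma card_mult_sum_length_hd_run_seqs:
  assumes "finite A"
  shows "k * (\<Sum>ps\<in>run_seqs R A k. length (hd ps)) = card A * card (run_seqs R A k)"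
proof (cases "k = 0")
  case True
  then have "run_seqs R A k \<subseteq> {[]}" "[] \<in> run_seqs R A k \<Longrightarrow> card A = 0"
    by (auto simp: run_seqs_def permutations_of_set_def)
  then show ?thesis
    using True by (cases "run_seqs R A k = {}") (auto dest: subset_singletonD)
next
  case False
  have len: "length ps = k" if "ps \<in> run_seqs R A k" for ps
    using that by (simp add: run_seqs_def)
  have card_A: "card A = (\<Sum>i<k. length (ps ! i))" if "ps \<in> run_seqs R A k" for ps
    using length_concat_run_seqs[OF assms that] len[OF that]
    by (simp add: length_concat sum_list_sum_nth atLeast0LessThan)
  have "card A * card (run_seqs R A k) = (\<Sum>ps\<in>run_seqs R A k. card A)"
    by simp
  also have "\<dots> = (\<Sum>ps\<in>run_seqs R A k. \<Sum>i<k. length (ps ! i))"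
    using card_A by (rule sum.cong[OF refl])
  also have "\<dots> = (\<Sum>i<k. \<Sum>ps\<in>run_seqs R A k. length (hd (rotate i ps)))"
  proof -
    have "hd (rotate i ps) = ps ! i" if "ps \<in> run_seqs R A k" "i < k" for i ps
      using that len[OF that(1)] by (subst hd_rotate_conv_nth) auto
    then show ?thesis by (subst sum.swap) (auto intro!: sum.cong)
  qed
  also have "\<dots> = k * (\<Sum>ps\<in>run_seqs R A k. length (hd ps))"
    by (simp add: sum_rotate_invariant[OF len rotate_run_seqs, where f = "\<lambda>ps. length (hd ps)"])
  finally show ?thesis ..
qed

section \<open>Blocks of consecutive values\<close>

definition differ_by_one :: "nat \<Rightarrow> nat \<Rightarrow> bool" where
  "differ_by_one a b \<longleftrightarrow> a = Suc b \<or> b = Suc a"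

abbreviation block_seqs :: "nat \<Rightarrow> nat \<Rightarrow> nat list list set" where
  "block_seqs n k \<equiv> run_seqs differ_by_one {1..n} k"

lemma interval_Cons_differ_by_one:
  assumes r: "r = [a..<a + length r] \<or> r = rev [a..<a + length r]" "r \<noteq> []"
    and x: "differ_by_one x (hd r)" "x \<notin> set r"
  shows "\<exists>b. x # r = [b..<b + length (x # r)] \<or> x # r = rev [b..<b + length (x # r)]"
proof -
  obtain m where m: "length r = Suc m"
    using r(2) by (cases r) auto
  have set_r: "set r = {a..a + m}"
    using r(1) m by (auto simp del: upt_Suc)
  from r(1) m consider (up) "r = [a..<Suc (a + m)]" | (down) "r = rev [a..<Suc (a + m)]"
    by (auto simp del: upt_Suc)
  then show ?thesis
  proof cases
    case up
    then have "hd r = a" by (simp add: upt_conv_Cons del: upt_Suc)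
    with x set_r have "x = Suc a \<and> m = 0 \<or> a = Suc x"
      by (auto simp: differ_by_one_def)
    then show ?thesis
    proof
      assume "x = Suc a \<and> m = 0"
      with up show ?thesis by (intro exI[of _ a]) simp
    next
      assume "a = Suc x"
      with up m show ?thesis by (intro exI[of _ x]) (simp add: upt_conv_Cons del: upt_Suc)
    qed
  next
    case down
    then have "hd r = a + m" by (simp add: hd_rev)
    with x set_r have "x = Suc (a + m) \<or> a = Suc x \<and> m = 0"
      by (auto simp: differ_by_one_def)
    then show ?thesis
    proof
      assume "x = Suc (a + m)"
      with down m show ?thesis by (intro exI[of _ a]) simp
    next
      assume "a = Suc x \<and> m = 0"
      with down show ?thesis by (intro exI[of _ x]) simp
    qed
  qed
qed

lemma distinct_run_differ_by_one:
  assumes "is_run differ_by_one p" "distinct p"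
  shows "\<exists>a. p = [a..<a + length p] \<or> p = rev [a..<a + length p]"
  using assms
proof (induction p)
  case (Cons x r)
  show ?case
  proof (cases "r = []")
    case False
    with Cons.prems have "is_run differ_by_one r" "distinct r" "differ_by_one x (hd r)" "x \<notin> set r"
      by (auto simp: is_run_def successively_Cons)
    with False Cons.IH show ?thesis
      by (metis interval_Cons_differ_by_one)
  qed (auto intro: exI[of _ x])
qed simp

definition top_blocks :: "nat \<Rightarrow> nat \<Rightarrow> nat list set" where
  "top_blocks n c = {[Suc n - c..<Suc n], rev [Suc n - c..<Suc n]}"

lemma successively_differ_by_one_upt:
  "successively differ_by_one [a..<b]" "successively differ_by_one (rev [a..<b])"
  unfolding successively_rev by (auto simp: successively_conv_nth differ_by_one_def)

lemma top_blocksD: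
  assumes "p \<in> top_blocks n c" "1 \<le> c" "c \<le> n"
  shows "is_run differ_by_one p" "distinct p" "set p = {Suc n - c..n}" "length p = c"
proof -
  show "is_run differ_by_one p"
    using assms successively_differ_by_one_upt
    by (auto simp: top_blocks_def is_run_def simp del: upt_Suc successively_rev)
  show "distinct p" "set p = {Suc n - c..n}" "length p = c"
    using assms by (auto simp: top_blocks_def)
qed

lemma finite_top_blocks: "finite (top_blocks n c)"
  by (simp add: top_blocks_def)

lemma card_top_blocks:
  assumes "1 \<le> c" "c \<le> n"
  shows "card (top_blocks n c) = (if c = 1 then 1 else 2)"
proof -
  have "hd [Suc n - c..<Suc n] = Suc n - c"
    using assms by (simp add: upt_conv_Cons del: upt_Suc)
  moreover have "hd (rev [Suc n - c..<Suc n]) = n"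
    using assms by (auto simp: hd_rev)
  moreover have "c \<noteq> 1 \<Longrightarrow> Suc n - c \<noteq> n"
    using assms by auto
  ultimately have "c \<noteq> 1 \<Longrightarrow> [Suc n - c..<Suc n] \<noteq> rev [Suc n - c..<Suc n]"
    by metis
  then show ?thesis
    by (auto simp: top_blocks_def)
qed

lemma block_containing_max_in_top_blocks:
  assumes "is_run differ_by_one p" "distinct p" "set p \<subseteq> {1..n}" "n \<in> set p"
  shows "p \<in> top_blocks n (length p)"
proof -
  obtain a where a: "p = [a..<a + length p] \<or> p = rev [a..<a + length p]"
    using distinct_run_differ_by_one[OF assms(1,2)] by blast
  then have set_p: "set p = {a..<a + length p}" by (metis set_rev set_upt)
  have "length p > 0" using assms(1) by (simp add: is_run_def)
  then have "a + length p - 1 \<in> set p" unfolding set_p atLeastLessThan_iff by arith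
  then have "a + length p - 1 \<le> n"
    using assms(3) by auto
  moreover have "n < a + length p"
    using assms(4) unfolding set_p by auto
  ultimately have "a + length p = Suc n" by arith
  then show ?thesis
    using a by (auto simp: top_blocks_def)
qed

definition insert_at :: "nat \<Rightarrow> 'a \<Rightarrow> 'a list \<Rightarrow> 'a list" where
  "insert_at i x xs = take i xs @ x # drop i xs"

lemma takeWhile_insert_at:
  "P x \<Longrightarrow> \<forall>y\<in>set xs. \<not> P y \<Longrightarrow> takeWhile (\<lambda>y. \<not> P y) (insert_at i x xs) = take i xs"
  unfolding insert_at_def by (subst takeWhile_append2) (auto dest: in_set_takeD)

lemma insert_at_inj:
  assumes "i \<le> length xs" "i' \<le> length xs'" "P x" "P x'"
    "\<forall>y\<in>set xs. \<not> P y" "\<forall>y\<in>set xs'. \<not> P y" "insert_at i x xs = insert_at i' x' xs'"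
  shows "i = i' \<and> x = x' \<and> xs = xs'"
proof -
  have "take i xs = take i' xs'"
    using takeWhile_insert_at[of P x xs i] takeWhile_insert_at[of P x' xs' i'] assms(3-7) by simp
  moreover from this have "i = i'"
    using assms(1,2) by (metis length_take min_absorb2)
  ultimately show ?thesis
    using assms(7) by (metis append_eq_append_conv append_take_drop_id insert_at_def list.inject)
qed

lemma mset_concat_insert_at: "mset (concat (insert_at i p ps)) = mset p + mset (concat ps)"
proof -
  have "mset (concat ps) = mset (concat (take i ps)) + mset (concat (drop i ps))"
    by (metis append_take_drop_id concat_append mset_append)
  then show ?thesis by (simp add: insert_at_def)
qed

lemma permutations_of_set_iff_mset:
  "finite A \<Longrightarrow> xs \<in> permutations_of_set A \<longleftrightarrow> mset xs = mset_set A"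
  by (simp add: permutations_of_set_altdef permutations_of_multiset_def)

lemma insert_at_top_block_in_block_seqs:
  assumes c: "1 \<le> c" "c \<le> n" and p: "p \<in> top_blocks n c" and i: "i \<le> k"
    and ps: "ps \<in> block_seqs (n - c) k"
  shows "insert_at i p ps \<in> block_seqs n (Suc k)"
proof -
  note p_props = top_blocksD[OF p c]
  have "mset (concat (insert_at i p ps)) = mset_set {Suc n - c..n} + mset_set {1..n - c}"
    using ps p_props by (simp add: mset_concat_insert_at run_seqs_def permutations_of_set_iff_mset
        flip: mset_set_set)
  also have "\<dots> = mset_set {1..n}"
  proof -
    have "{Suc n - c..n} \<union> {1..n - c} = {1..n}" using c by auto
    then show ?thesis by (subst mset_set_Union[symmetric]) auto
  qed
  finally show ?thesis
    using ps i p_props by (auto simp: run_seqs_def permutations_of_set_iff_mset insert_at_def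
        dest: in_set_takeD in_set_dropD)
qed

lemma block_seqs_Suc_max_block:
  assumes qs: "qs \<in> block_seqs n (Suc k)"
  obtains i where "i < length qs" "n \<in> set (qs ! i)"
proof -
  have "qs \<noteq> []" "\<forall>q\<in>set qs. q \<noteq> []"
    using qs by (auto simp: run_seqs_def is_run_def)
  then have "set (concat qs) \<noteq> {}"
    by (cases qs) auto
  then have "{1..n} \<noteq> {}"
    using set_concat_run_seqs[OF qs] by metis
  then have "n \<in> set (concat qs)"
    using set_concat_run_seqs[OF qs] by auto
  then obtain q where "q \<in> set qs" "n \<in> set q"
    by auto
  then show thesis
    using that by (metis in_set_conv_nth)
qed

text \<open>Removing the block that contains the maximum \<open>n\<close> inverts the insertion.\<close>
lemma block_seqs_Suc_cases:
  assumes qs: "qs \<in> block_seqs n (Suc k)"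
  obtains c p i ps where "1 \<le> c" "c \<le> n" "p \<in> top_blocks n c" "i \<le> k"
    "ps \<in> block_seqs (n - c) k" "qs = insert_at i p ps"
proof -
  have len: "length qs = Suc k" and runs: "\<forall>q\<in>set qs. is_run differ_by_one q"
    and perm: "mset (concat qs) = mset_set {1..n}"
    using qs by (simp_all add: run_seqs_def permutations_of_set_iff_mset)
  obtain i where i: "i < length qs" "n \<in> set (qs ! i)"
    using block_seqs_Suc_max_block[OF qs] .
  define p where "p = qs ! i"
  define c where "c = length p"
  define ps where "ps = take i qs @ drop (Suc i) qs"
  have qs_eq: "qs = insert_at i p ps"
    using i(1) by (simp add: insert_at_def p_def ps_def id_take_nth_drop min_absorb2)
  have p_run: "is_run differ_by_one p"
    using runs i(1) by (simp add: p_def)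
  have "distinct p" "set p \<subseteq> {1..n}"
    using distinct_concat_run_seqs[OF qs] set_concat_run_seqs[OF qs]
    by (auto simp: qs_eq insert_at_def)
  then have p_top: "p \<in> top_blocks n c"
    using block_containing_max_in_top_blocks[OF p_run] i(2) by (simp add: p_def c_def)
  have c: "1 \<le> c" "c \<le> n"
    using p_run \<open>distinct p\<close> card_mono[OF _ \<open>set p \<subseteq> {1..n}\<close>]
    by (auto simp: c_def is_run_def Suc_le_eq distinct_card)
  have "mset_set {Suc n - c..n} + mset (concat ps) = mset_set {1..n}"
    using perm top_blocksD[OF p_top c] by (simp add: qs_eq mset_concat_insert_at flip: mset_set_set)
  then have "mset (concat ps) = mset_set {1..n} - mset_set {Suc n - c..n}"
    by (metis add_diff_cancel_left')
  also have "\<dots> = mset_set {1..n - c}"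
  proof -
    have "{1..n} - {Suc n - c..n} = {1..n - c}" using c by auto
    then show ?thesis using c by (subst mset_set_Diff[symmetric]) auto
  qed
  finally have "ps \<in> block_seqs (n - c) k"
    using len runs i(1) by (auto simp: run_seqs_def permutations_of_set_iff_mset ps_def
        dest: in_set_takeD in_set_dropD)
  moreover have "i \<le> k"
    using i(1) len by simp
  ultimately show thesis
    using that c p_top qs_eq by blast
qed

definition top_block_insertions :: "nat \<Rightarrow> nat \<Rightarrow> (nat \<times> nat list \<times> nat \<times> nat list list) set" where
  "top_block_insertions n k = (SIGMA c:{1..n}. SIGMA p:top_blocks n c. {..k} \<times> block_seqs (n - c) k)"

lemma inj_on_insert_top_block:
  "inj_on (\<lambda>(c, p, i, ps). insert_at i p ps) (top_block_insertions n k)"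
proof (rule inj_onI)
  fix x x' assume "x \<in> top_block_insertions n k" "x' \<in> top_block_insertions n k"
    and eq: "(\<lambda>(c, p, i, ps). insert_at i p ps) x = (\<lambda>(c, p, i, ps). insert_at i p ps) x'"
  then obtain c p i ps c' p' i' ps' where x: "x = (c, p, i, ps)" "x' = (c', p', i', ps')"
    and c: "1 \<le> c" "c \<le> n" and p: "p \<in> top_blocks n c" and i: "i \<le> k"
    and ps: "ps \<in> block_seqs (n - c) k"
    and c': "1 \<le> c'" "c' \<le> n" and p': "p' \<in> top_blocks n c'" and i': "i' \<le> k"
    and ps': "ps' \<in> block_seqs (n - c') k"
    by (auto simp: top_block_insertions_def)
  have "i = i' \<and> p = p' \<and> ps = ps'"
  proof (rule insert_at_inj[where P = "\<lambda>q. n \<in> set q"])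
    show "insert_at i p ps = insert_at i' p' ps'"
      using eq by (simp add: x)
    show "i \<le> length ps" "i' \<le> length ps'"
      using i i' ps ps' by (simp_all add: run_seqs_def)
    show "n \<in> set p" "n \<in> set p'"
      using top_blocksD(3)[OF p c] top_blocksD(3)[OF p' c'] c c' by auto
    have "n \<notin> set (concat ps)" "n \<notin> set (concat ps')"
      using set_concat_run_seqs[OF ps] set_concat_run_seqs[OF ps'] c c' by auto
    then show "\<forall>q\<in>set ps. n \<notin> set q" "\<forall>q\<in>set ps'. n \<notin> set q"
      by auto
  qed
  moreover have "c = c'"
    using top_blocksD(4)[OF p c] top_blocksD(4)[OF p' c'] calculation by simp
  ultimately show "x = x'"
    by (simp add: x)
qed

lemma bij_betw_insert_top_block:
  "bij_betw (\<lambda>(c, p, i, ps). insert_at i p ps) (top_block_insertions n k) (block_seqs n (Suc k))"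
proof (rule bij_betw_imageI[OF inj_on_insert_top_block])
  show "(\<lambda>(c, p, i, ps). insert_at i p ps) ` top_block_insertions n k = block_seqs n (Suc k)"
  proof
    show "(\<lambda>(c, p, i, ps). insert_at i p ps) ` top_block_insertions n k \<subseteq> block_seqs n (Suc k)"
      by (clarify, rule insert_at_top_block_in_block_seqs) (auto simp: top_block_insertions_def)
    show "block_seqs n (Suc k) \<subseteq> (\<lambda>(c, p, i, ps). insert_at i p ps) ` top_block_insertions n k"
    proof
      fix qs assume "qs \<in> block_seqs n (Suc k)"
      then obtain c p i ps where "1 \<le> c" "c \<le> n" "p \<in> top_blocks n c" "i \<le> k"
        "ps \<in> block_seqs (n - c) k" "qs = insert_at i p ps"
        by (rule block_seqs_Suc_cases)
      then show "qs \<in> (\<lambda>(c, p, i, ps). insert_at i p ps) ` top_block_insertions n k"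
        by (intro image_eqI[where x = "(c, p, i, ps)"]) (auto simp: top_block_insertions_def)
    qed
  qed
qed

lemma card_block_seqs_Suc:
  "card (block_seqs n (Suc k)) =
     (\<Sum>c=1..n. card (top_blocks n c) * (Suc k * card (block_seqs (n - c) k)))"
  by (subst bij_betw_same_card[OF bij_betw_insert_top_block, symmetric])
    (simp add: top_block_insertions_def card_SigmaI finite_run_seqs card_cartesian_product
      finite_top_blocks)

lemma card_block_seqs_0: "card (block_seqs n 0) = (if n = 0 then 1 else 0)"
proof (cases "n = 0")
  case True
  then have "block_seqs n 0 = {[]}"
    by (auto simp: run_seqs_def permutations_of_set_def)
  then show ?thesis using True by simp
next
  case False
  then have "block_seqs n 0 = {}"
    by (auto simp: run_seqs_def permutations_of_set_def)
  then show ?thesis using False by simp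
qed

lemma signed_block_fps_nth_eq_card_top_blocks:
  "1 \<le> c \<Longrightarrow> c \<le> n \<Longrightarrow> signed_block_fps $ c = (-1) ^ (c - 1) * of_nat (card (top_blocks n c))"
  by (simp add: signed_block_fps_nth card_top_blocks)

lemma signed_block_fps_power_Suc_nth:
  "((signed_block_fps :: 'a::field fps) ^ Suc k) $ n =
     (\<Sum>c=1..n. signed_block_fps $ c * (signed_block_fps ^ k) $ (n - c))"
  by (simp add: fps_mult_nth sum.atLeast_Suc_atMost signed_block_fps_nth)

lemma card_block_seqs_eq_coeff:
  "real (card (block_seqs n k)) = (-1) ^ (n + k) * fact k * (signed_block_fps ^ k) $ n"
proof (induction k arbitrary: n)
  case 0
  then show ?case using card_block_seqs_0[of n] by simp
next
  case (Suc k)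
  have summand: "real (card (top_blocks n c) * (Suc k * card (block_seqs (n - c) k))) =
      (-1) ^ (n + Suc k) * fact (Suc k) * (signed_block_fps $ c * (signed_block_fps ^ k) $ (n - c))"
    if c: "c \<in> {1..n}" for c
  proof -
    let ?B = "real (card (block_seqs (n - c) k))" and ?T = "real (card (top_blocks n c))"
    have "n + Suc k + (c - 1) + (n - c + k) = 2 * (n + k)"
      using c by auto
    then have sign: "(-1::real) ^ (n + Suc k) * (-1) ^ (c - 1) * (-1) ^ (n - c + k) = 1"
      by (simp only: power_add[symmetric] power_mult) simp
    have IH: "fact k * (signed_block_fps ^ k) $ (n - c) = (-1) ^ (n - c + k) * ?B"
      using Suc.IH[of "n - c"] by (simp flip: power_add add: power_mult mult.assoc[symmetric])
    have "(-1) ^ (n + Suc k) * fact (Suc k) * (signed_block_fps $ c * (signed_block_fps ^ k) $ (n - c))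
        = (-1) ^ (n + Suc k) * (-1) ^ (c - 1) * real (Suc k) * ?T *
          (fact k * (signed_block_fps ^ k) $ (n - c))"
      using c by (simp add: signed_block_fps_nth_eq_card_top_blocks[of c n] fact_Suc mult_ac)
    also have "\<dots> = ((-1) ^ (n + Suc k) * (-1) ^ (c - 1) * (-1) ^ (n - c + k)) * real (Suc k) * ?T * ?B"
      by (simp only: IH mult_ac)
    also have "\<dots> = real (Suc k) * ?T * ?B"
      by (simp only: sign mult_1_left)
    finally show ?thesis
      by (simp add: algebra_simps)
  qed
  have "real (card (block_seqs n (Suc k))) =
      (\<Sum>c=1..n. real (card (top_blocks n c) * (Suc k * card (block_seqs (n - c) k))))"
    by (simp only: card_block_seqs_Suc of_nat_sum)
  also have "\<dots> = (\<Sum>c=1..n. (-1) ^ (n + Suc k) * fact (Suc k) *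
      (signed_block_fps $ c * (signed_block_fps ^ k) $ (n - c)))"
    by (rule sum.cong[OF refl summand])
  also have "\<dots> = (-1) ^ (n + Suc k) * fact (Suc k) * (signed_block_fps ^ Suc k) $ n"
    by (simp only: signed_block_fps_power_Suc_nth sum_distrib_left)
  finally show ?case .
qed

section \<open>Cylindrical king permutations\<close>

lemma bij_betw_map_permutes:
  assumes "distinct xs"
  shows "bij_betw (\<lambda>\<sigma>. map \<sigma> xs) {\<sigma>. \<sigma> permutes set xs} (permutations_of_set (set xs))"
proof -
  let ?f = "\<lambda>\<sigma>. map \<sigma> xs"
  have inj: "inj_on ?f {\<sigma>. \<sigma> permutes set xs}"
  proof (rule inj_onI)
    fix \<sigma> \<tau> assume "\<sigma> \<in> {\<sigma>. \<sigma> permutes set xs}" "\<tau> \<in> {\<sigma>. \<sigma> permutes set xs}"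
      and eq: "?f \<sigma> = ?f \<tau>"
    then have "\<sigma> x = \<tau> x" for x
      by (cases "x \<in> set xs") (simp_all add: map_eq_conv permutes_not_in)
    then show "\<sigma> = \<tau>" ..
  qed
  have xs: "xs \<in> permutations_of_set (set xs)"
    using assms by auto
  have "?f \<sigma> \<in> permutations_of_set (set xs)" if "\<sigma> permutes set xs" for \<sigma>
    using permutations_of_set_image_permutes[OF that] xs by blast
  then have "?f ` {\<sigma>. \<sigma> permutes set xs} \<subseteq> permutations_of_set (set xs)"
    by blast
  moreover have "card (?f ` {\<sigma>. \<sigma> permutes set xs}) = card (permutations_of_set (set xs))"
    by (simp add: card_image[OF inj] card_permutations)
  ultimately have "?f ` {\<sigma>. \<sigma> permutes set xs} = permutations_of_set (set xs)"
    by (intro card_subset_eq) simp_all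
  with inj show ?thesis
    by (simp add: bij_betw_def)
qed

lemma not_differ_by_one_iff:
  "a \<noteq> b \<Longrightarrow> \<not> differ_by_one a b \<longleftrightarrow> \<bar>int a - int b\<bar> > 1"
  by (auto simp: differ_by_one_def)

lemma cyclic_rel_map_upt:
  assumes "i < n"
  shows "cyclic_rel R (map \<sigma> [1..<Suc n]) i =
    (if Suc i < n then R (\<sigma> (Suc i)) (\<sigma> (Suc (Suc i))) else R (\<sigma> n) (\<sigma> 1))"
  using assms by (cases "Suc i = n") (auto simp: cyclic_rel_def nth_map_upt simp del: upt_Suc)

lemma CK_iff_cyclic:
  assumes n: "2 \<le> n" and \<sigma>: "\<sigma> permutes {1..n}"
  shows "\<sigma> \<in> CK n \<longleftrightarrow> (\<forall>i<n. \<not> cyclic_rel differ_by_one (map \<sigma> [1..<Suc n]) i)"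
proof -
  have gap: "\<not> differ_by_one (\<sigma> a) (\<sigma> b) \<longleftrightarrow> \<bar>int (\<sigma> a) - int (\<sigma> b)\<bar> > 1" if "a \<noteq> b" for a b
    using not_differ_by_one_iff permutes_inj[OF \<sigma>] that by (metis injD)
  have "{..<n} = insert (n - 1) {i. Suc i < n}"
    using n by auto
  then have split_last: "(\<forall>i<n. Q i) \<longleftrightarrow> (\<forall>i. Suc i < n \<longrightarrow> Q i) \<and> Q (n - 1)" for Q
    by (metis (no_types, lifting) insert_iff lessThan_iff mem_Collect_eq)
  have shift: "(\<forall>i\<in>{1..<n}. Q i) \<longleftrightarrow> (\<forall>i. Suc i < n \<longrightarrow> Q (Suc i))" for Q
  proof
    assume Q: "\<forall>i. Suc i < n \<longrightarrow> Q (Suc i)"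
    show "\<forall>i\<in>{1..<n}. Q i"
    proof
      fix i assume i: "i \<in> {1..<n}"
      then obtain j where "i = Suc j" by (cases i) auto
      with Q i show "Q i" by auto
    qed
  qed auto
  have "(\<forall>i<n. \<not> cyclic_rel differ_by_one (map \<sigma> [1..<Suc n]) i) \<longleftrightarrow>
      (\<forall>i. Suc i < n \<longrightarrow> \<not> differ_by_one (\<sigma> (Suc i)) (\<sigma> (Suc (Suc i)))) \<and>
      \<not> differ_by_one (\<sigma> n) (\<sigma> 1)"
    unfolding split_last using n cyclic_rel_map_upt[of _ n differ_by_one \<sigma>] by (simp del: upt_Suc)
  also have "\<dots> \<longleftrightarrow> (\<forall>i\<in>{1..<n}. \<bar>int (\<sigma> i) - int (\<sigma> (Suc i))\<bar> > 1) \<and> \<bar>int (\<sigma> 1) - int (\<sigma> n)\<bar> > 1"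
    unfolding shift using n by (simp add: gap abs_minus_commute)
  finally show ?thesis
    using n \<sigma> by (simp add: CK_def)
qed

lemma card_CK_eq_card_cyclic:
  assumes "2 \<le> n"
  shows "card (CK n) =
    card {xs \<in> permutations_of_set {1..n}. \<forall>i<n. \<not> cyclic_rel differ_by_one xs i}"
proof -
  let ?f = "\<lambda>\<sigma>. map \<sigma> [1..<Suc n]"
  have bij: "bij_betw ?f {\<sigma>. \<sigma> permutes {1..n}} (permutations_of_set {1..n})"
    using bij_betw_map_permutes[of "[1..<Suc n]"]
    by (simp add: atLeastLessThanSuc_atLeastAtMost del: upt_Suc)
  have CK: "CK n = {\<sigma> \<in> {\<sigma>. \<sigma> permutes {1..n}}. \<forall>i<n. \<not> cyclic_rel differ_by_one (?f \<sigma>) i}"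
  proof (intro set_eqI)
    fix \<sigma>
    show "\<sigma> \<in> CK n \<longleftrightarrow> \<sigma> \<in> {\<sigma> \<in> {\<sigma>. \<sigma> permutes {1..n}}. \<forall>i<n. \<not> cyclic_rel differ_by_one (?f \<sigma>) i}"
    proof (cases "\<sigma> permutes {1..n}")
      case True
      then show ?thesis using CK_iff_cyclic[OF assms True] by simp
    qed (simp add: CK_def)
  qed
  have "inj_on ?f (CK n)"
    using bij_betw_imp_inj_on[OF bij] by (rule inj_on_subset) (auto simp: CK)
  then have "card (CK n) = card (?f ` CK n)"
    by (rule card_image[symmetric])
  also have "?f ` CK n = {xs \<in> ?f ` {\<sigma>. \<sigma> permutes {1..n}}. \<forall>i<n. \<not> cyclic_rel differ_by_one xs i}"
    unfolding CK by blast
  also have "?f ` {\<sigma>. \<sigma> permutes {1..n}} = permutations_of_set {1..n}"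
    using bij by (simp add: bij_betw_def)
  finally show ?thesis .
qed

text \<open>For \<open>n \<ge> 3\<close> the two cyclic neighbours of the entry \<open>1\<close> would both have to be \<open>2\<close>.\<close>
lemma permutation_not_all_cyclic_differ_by_one:
  assumes n: "3 \<le> n" and xs: "xs \<in> permutations_of_set {1..n}"
  shows "\<exists>i<n. \<not> cyclic_rel differ_by_one xs i"
proof (rule ccontr)
  assume "\<not> ?thesis"
  then have all: "cyclic_rel differ_by_one xs i" if "i < n" for i
    using that by blast
  have len: "length xs = n" and distinct: "distinct xs" and set: "set xs = {1..n}"
    using xs length_finite_permutations_of_set[OF xs] by (auto simp: permutations_of_set_def)
  have "1 \<in> set xs"
    using n set by simp
  then obtain i where i: "i < n" "xs ! i = 1"
    by (metis in_set_conv_nth len)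
  define a where "a = (if Suc i = n then 0 else Suc i)"
  define b where "b = (if i = 0 then n - 1 else i - 1)"
  have ab: "a < n" "b < n" "a \<noteq> b" "Suc i mod n = a" "Suc b mod n = i"
    using i n by (auto simp: a_def b_def)
  have not_0: "xs ! j \<noteq> 0" if "j < n" for j
    using that set len nth_mem[of j xs] by auto
  have "differ_by_one 1 (xs ! a)" "differ_by_one (xs ! b) 1"
    using all[OF i(1)] all[OF ab(2)] i(2) ab(4,5) by (simp_all add: cyclic_rel_def len)
  then have "xs ! a = xs ! b"
    using not_0[OF ab(1)] not_0[OF ab(2)] by (auto simp: differ_by_one_def)
  then show False
    using nth_eq_iff_index_eq[OF distinct, of a b] ab(1-3) len by simp
qed

lemma sum_length_hd_block_seqs:
  "real (\<Sum>ps\<in>block_seqs n (Suc m). length (hd ps)) =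
     (-1) ^ (n + Suc m) * real n * fact m * (signed_block_fps ^ Suc m) $ n"
proof -
  have "real (Suc m) * real (\<Sum>ps\<in>block_seqs n (Suc m). length (hd ps)) =
      real n * real (card (block_seqs n (Suc m)))"
    using card_mult_sum_length_hd_run_seqs[where A = "{1..n}" and k = "Suc m" and R = differ_by_one]
    by (simp only: of_nat_mult[symmetric] card_atLeastAtMost finite_atLeastAtMost diff_Suc_1)
  also have "\<dots> = real (Suc m) * ((-1) ^ (n + Suc m) * real n * fact m * (signed_block_fps ^ Suc m) $ n)"
    unfolding card_block_seqs_eq_coeff fact_Suc by (simp add: algebra_simps)
  finally show ?thesis
    by (simp only: mult_cancel_left of_nat_eq_0_iff nat.distinct simp_thms)
qed

lemma card_CK_eq_sum:
  assumes n: "3 \<le> n"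
  shows "real (card (CK n)) = (\<Sum>m<n. fact m * real n * (signed_block_fps ^ Suc m) $ n)"
proof -
  let ?S = "\<lambda>k. \<Sum>ps\<in>block_seqs n k. length (hd ps)"
  have "int (card (CK n)) = (\<Sum>xs\<in>permutations_of_set {1..n}.
      \<Sum>ps\<in>run_decomps differ_by_one xs. (-1) ^ (n + length ps) * int (length (hd ps)))"
    using card_CK_eq_card_cyclic card_cyclic_avoiding_permutations[where A = "{1..n}" and R = differ_by_one]
      permutation_not_all_cyclic_differ_by_one n by simp
  also have "\<dots> = (\<Sum>k\<le>n. \<Sum>ps\<in>block_seqs n k. (-1) ^ (n + length ps) * int (length (hd ps)))"
    using sum_permutations_run_decomps[where A = "{1..n}" and R = differ_by_one] by simp
  also have "\<dots> = (\<Sum>k\<le>n. (-1) ^ (n + k) * int (?S k))"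
    by (auto simp: run_seqs_def sum_distrib_left intro!: sum.cong)
  finally have "real_of_int (int (card (CK n))) = real_of_int (\<Sum>k\<le>n. (-1) ^ (n + k) * int (?S k))"
    by (rule arg_cong)
  then have "real (card (CK n)) = (\<Sum>k\<le>n. (-1) ^ (n + k) * real (?S k))"
    by simp
  also have "\<dots> = (\<Sum>m<n. (-1) ^ (n + Suc m) * real (?S (Suc m)))"
  proof -
    have "block_seqs n 0 = {}"
      using card_block_seqs_0[of n] finite_run_seqs[of "{1..n}" differ_by_one 0] n by simp
    then show ?thesis by (simp add: sum.atMost_shift)
  qed
  also have "\<dots> = (\<Sum>m<n. fact m * real n * (signed_block_fps ^ Suc m) $ n)"
  proof (rule sum.cong[OF refl])
    fix m
    have sign: "(-1::real) ^ (n + Suc m) * ((-1) ^ (n + Suc m) * x) = x" for x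
      by (simp add: mult.assoc[symmetric] flip: power_mult_distrib)
    show "(-1) ^ (n + Suc m) * real (?S (Suc m)) = fact m * real n * (signed_block_fps ^ Suc m) $ n"
      unfolding sum_length_hd_block_seqs by (simp add: mult.assoc sign)
  qed
  finally show ?thesis .
qed

lemma card_CK_1: "card (CK 1) = 1"
  by (simp add: CK_def card_permutations)

lemma card_CK_2: "card (CK 2) = 0"
proof -
  have "CK 2 = {}"
  proof safe
    fix \<sigma> assume "\<sigma> \<in> CK 2"
    then have \<sigma>: "\<sigma> permutes {1..2}" and gap: "\<bar>int (\<sigma> 1) - int (\<sigma> 2)\<bar> > 1"
      by (auto simp: CK_def)
    have "\<sigma> 1 \<in> {1..2}" "\<sigma> 2 \<in> {1..2}"
      using permutes_in_image[OF \<sigma>] by auto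
    then show "\<sigma> \<in> {}"
      using gap by auto
  qed
  then show ?thesis by simp
qed

lemma CK_gf_minus_nth:
  "(CK_gf - 2 * fps_X ^ 2) $ n = (\<Sum>m<n. fact m * real n * (signed_block_fps ^ Suc m) $ n)"
proof -
  have nth: "(CK_gf - 2 * fps_X ^ 2) $ n =
      (if n = 0 then 0 else real (card (CK n))) - (if n = 2 then 2 else 0)"
    by (simp add: CK_gf_def numeral_fps_const)
  consider "n = 0" | "n = 1" | "n = 2" | "3 \<le> n"
    by linarith
  then show ?thesis
  proof cases
    case 3
    have "(signed_block_fps ^ 2 :: real fps) $ 2 = 1"
      by (simp add: power2_eq_square fps_mult_nth signed_block_fps_nth atLeast0AtMost numeral_2_eq_2)
    then show ?thesis
      using nth card_CK_2 3 by (simp add: signed_block_fps_nth numeral_2_eq_2)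
  qed (use nth card_CK_1 card_CK_eq_sum in \<open>simp_all add: signed_block_fps_nth\<close>)
qed

theorem theorem4p2:
  shows "CK_gf = 2 * fps_X ^ 2 +
    (\<Sum>m. fps_const (fact (Suc m)) * fps_X ^ m * ((1 - fps_X) / (1 + fps_X)) ^ m *
           (fps_X * (1 - 2 * fps_X - fps_X ^ 2) / (1 + fps_X) ^ 2))"
proof -
  let ?T = "\<lambda>m. fps_const (fact m :: real) * (fps_X * fps_deriv (signed_block_fps ^ Suc m))"
  have T_nth: "?T m $ n = fact m * real n * (signed_block_fps ^ Suc m) $ n" for m n
    by (simp only: fps_mult_left_const_nth fps_X_mult_deriv_nth mult.assoc)
  have "?T sums Abs_fps (\<lambda>n. \<Sum>m<n. ?T m $ n)"
    by (rule sums_fps_of_nth_vanishing) (subst T_nth, simp add: signed_block_fps_power_nth_eq_0 del: power_Suc)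
  also have "Abs_fps (\<lambda>n. \<Sum>m<n. ?T m $ n) = CK_gf - 2 * fps_X ^ 2"
    by (intro fps_ext) (simp only: fps_nth_Abs_fps T_nth CK_gf_minus_nth)
  finally have "(\<Sum>m. ?T m) = CK_gf - 2 * fps_X ^ 2"
    by (rule sums_unique[symmetric])
  then show ?thesis
    by (simp only: signed_block_fps_summand) simp
qed

end
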